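(* There exist absolute constants $c>0$ and $n_0$ such that for every $n\ge n_0$ and every $p$ with $\frac{100}{n}\le p\le 1-\frac{100}{n}$, if $G\sim G(n,p)$ then with probability at least $1-e^{-cn}$, $G$ contains at least $n/100$ pairwise vertex-disjoint induced copies of $P_3$.
   Context: $G(n,p)$ is the binomial random graph on $n$ labelled vertices. $P_3$ denotes the path with three edges (four vertices). *)

theory Defs
  imports Complex_Main
begin

text \<open>Graphs on the labelled vertex set {0..<n} are represented by their edge sets,
  an edge being a 2-element set of vertices.\<close>

definition all_edges :: "nat \<Rightarrow> nat set set" where
  "all_edges n = {{u, v} | u v. u < n \<and> v < n \<and> u \<noteq> v}"

text \<open>Probability that G(n,p) (each of the n choose 2 edges present independently
  with probability p) satisfies property P.\<close>

definition gnp_prob :: "nat \<Rightarrow> real \<Rightarrow> (nat set set \<Rightarrow> bool) \<Rightarrow> real" where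
  "gnp_prob n p P =
     (\<Sum>E\<in>Pow (all_edges n).
        if P E then p ^ card E * (1 - p) ^ (card (all_edges n) - card E) else 0)"

text \<open>An induced copy of P_3 (path a-b-c-d with three edges) in the graph with edge set E
  on vertex set {0..<n}.\<close>

definition induced_P3 :: "nat \<Rightarrow> nat set set \<Rightarrow> nat \<times> nat \<times> nat \<times> nat \<Rightarrow> bool" where
  "induced_P3 n E t = (case t of (a, b, c, d) \<Rightarrow>
      distinct [a, b, c, d] \<and> a < n \<and> b < n \<and> c < n \<and> d < n \<and>
      {a, b} \<in> E \<and> {b, c} \<in> E \<and> {c, d} \<in> E \<and>
      {a, c} \<notin> E \<and> {b, d} \<notin> E \<and> {a, d} \<notin> E)"

definition tuple_verts :: "nat \<times> nat \<times> nat \<times> nat \<Rightarrow> nat set" where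
  "tuple_verts t = (case t of (a, b, c, d) \<Rightarrow> {a, b, c, d})"

definition has_disjoint_induced_P3s :: "nat \<Rightarrow> nat set set \<Rightarrow> nat \<Rightarrow> bool" where
  "has_disjoint_induced_P3s n E k =
     (\<exists>xs. length xs = k \<and> (\<forall>t\<in>set xs. induced_P3 n E t) \<and>
        (\<forall>i<k. \<forall>j<k. i \<noteq> j \<longrightarrow> tuple_verts (xs ! i) \<inter> tuple_verts (xs ! j) = {}))"

end

theory Submission
  imports Defs
begin

text \<open>
  A graph without induced paths on four vertices (a cograph) with at least two vertices is
  disconnected or has a disconnected complement (Seinsche). Splitting repeatedly and setting
  the smaller side aside, any such graph on \<open>4m\<close> vertices contains two disjoint
  \<open>m\<close>-sets \<open>X\<close>, \<open>Y\<close> with either all or none of the edges between them.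
  In \<open>G(n,p)\<close> with \<open>m = n div 5 + 1\<close> and \<open>100/n \<le> p \<le> 1 - 100/n\<close>, a fixed pair is
  homogeneous with probability \<open>p^(m^2) + (1-p)^(m^2) \<le> 2 e^(-4n)\<close>, and there are at most
  \<open>4^n\<close> pairs.
\<close>

section \<open>Cographs\<close>

text \<open>\<open>P4\<close> counts vertices, as usual for cographs: it is the \<open>P_3\<close> of the theorem.\<close>

definition P4_free :: "('a \<Rightarrow> 'a \<Rightarrow> bool) \<Rightarrow> 'a set \<Rightarrow> bool" where
  "P4_free adj S \<longleftrightarrow> (\<forall>a\<in>S. \<forall>b\<in>S. \<forall>c\<in>S. \<forall>d\<in>S. distinct [a, b, c, d] \<longrightarrow>
      adj a b \<longrightarrow> adj b c \<longrightarrow> adj c d \<longrightarrow> adj a c \<or> adj b d \<or> adj a d)"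

definition anticomplete_to :: "('a \<Rightarrow> 'a \<Rightarrow> bool) \<Rightarrow> 'a set \<Rightarrow> 'a set \<Rightarrow> bool" where
  "anticomplete_to adj A B \<longleftrightarrow> (\<forall>a\<in>A. \<forall>b\<in>B. \<not> adj a b)"

definition complete_to :: "('a \<Rightarrow> 'a \<Rightarrow> bool) \<Rightarrow> 'a set \<Rightarrow> 'a set \<Rightarrow> bool" where
  "complete_to adj A B \<longleftrightarrow> (\<forall>a\<in>A. \<forall>b\<in>B. adj a b)"

definition homogeneous :: "('a \<Rightarrow> 'a \<Rightarrow> bool) \<Rightarrow> 'a set \<Rightarrow> 'a set \<Rightarrow> bool" where
  "homogeneous adj A B \<longleftrightarrow> anticomplete_to adj A B \<or> complete_to adj A B"

definition decomposable :: "('a \<Rightarrow> 'a \<Rightarrow> bool) \<Rightarrow> 'a set \<Rightarrow> bool" where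
  "decomposable adj S \<longleftrightarrow>
     (\<exists>A B. A \<union> B = S \<and> A \<inter> B = {} \<and> A \<noteq> {} \<and> B \<noteq> {} \<and> homogeneous adj A B)"

lemma P4_free_subset: "P4_free adj S \<Longrightarrow> T \<subseteq> S \<Longrightarrow> P4_free adj T"
  unfolding P4_free_def by blast

lemma symp_not: "symp adj \<Longrightarrow> symp (\<lambda>x y. \<not> adj x y)"
  by (auto simp: symp_def)

lemma P4_free_not:
  assumes sym: "symp adj" and P: "P4_free adj S"
  shows "P4_free (\<lambda>x y. \<not> adj x y) S"
  unfolding P4_free_def
proof (intro ballI impI)
  fix a b c d assume abcd: "a \<in> S" "b \<in> S" "c \<in> S" "d \<in> S" "distinct [a, b, c, d]"
    and non: "\<not> adj a b" "\<not> adj b c" "\<not> adj c d"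
  show "\<not> adj a c \<or> \<not> adj b d \<or> \<not> adj a d"
  proof (rule ccontr)
    assume "\<not> ?thesis"
    \<comment> \<open>then \<open>c-a-d-b\<close> is a path in \<open>adj\<close>\<close>
    then have "adj c a" "adj a d" "adj d b" using sym by (auto dest: sympD)
    moreover have "distinct [c, a, d, b]" using abcd by auto
    ultimately have "adj c d \<or> adj a b \<or> adj c b"
      using P abcd unfolding P4_free_def by blast
    then show False using non sym by (auto dest: sympD)
  qed
qed

lemma anticomplete_to_not [simp]:
  "anticomplete_to (\<lambda>x y. \<not> adj x y) A B \<longleftrightarrow> complete_to adj A B"
  by (simp add: anticomplete_to_def complete_to_def)

lemma complete_to_not [simp]:
  "complete_to (\<lambda>x y. \<not> adj x y) A B \<longleftrightarrow> anticomplete_to adj A B"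
  by (simp add: anticomplete_to_def complete_to_def)

lemma homogeneous_not [simp]: "homogeneous (\<lambda>x y. \<not> adj x y) A B \<longleftrightarrow> homogeneous adj A B"
  by (auto simp: homogeneous_def)

lemma decomposable_not [simp]: "decomposable (\<lambda>x y. \<not> adj x y) S \<longleftrightarrow> decomposable adj S"
  by (simp add: decomposable_def)

lemma anticomplete_to_commute:
  "symp adj \<Longrightarrow> anticomplete_to adj A B \<Longrightarrow> anticomplete_to adj B A"
  by (auto simp: anticomplete_to_def dest: sympD)

lemma homogeneous_commute: "symp adj \<Longrightarrow> homogeneous adj A B \<Longrightarrow> homogeneous adj B A"
  by (auto simp: homogeneous_def anticomplete_to_def complete_to_def dest: sympD)

lemma homogeneous_subset:
  "homogeneous adj A B \<Longrightarrow> A' \<subseteq> A \<Longrightarrow> B' \<subseteq> B \<Longrightarrow> homogeneous adj A' B'"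
  by (auto simp: homogeneous_def anticomplete_to_def complete_to_def)

lemma decomposable_insert_nonneighbour:
  assumes sym: "symp adj" and P: "P4_free adj (insert v (A \<union> B))" and v: "v \<notin> A \<union> B"
    and AB: "A \<inter> B = {}" "B \<noteq> {}" and anti: "anticomplete_to adj A B"
    and x: "x \<in> A" "\<not> adj v x"
  shows "decomposable adj (insert v (A \<union> B))"
proof (cases "\<exists>b\<in>B. adj v b")
  case False
  then have "anticomplete_to adj B (insert v A)"
    using anticomplete_to_commute[OF sym anti] sym by (auto simp: anticomplete_to_def dest: sympD)
  then show ?thesis
    unfolding decomposable_def homogeneous_def using v AB
    by (intro exI[of _ B] exI[of _ "insert v A"]) auto
next
  case True
  then obtain b where b: "b \<in> B" "adj v b" by blast
  define N where "N = {a \<in> A. adj v a}"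
  have no_edge: "\<not> adj x' y" if x': "x' \<in> A - N" and y: "y \<in> N" for x' y
  proof
    assume "adj x' y"
    \<comment> \<open>\<open>x'-y-v-b\<close> would be an induced path\<close>
    moreover have "adj y v" using y sym by (auto simp: N_def dest: sympD)
    moreover have "distinct [x', y, v, b]" using x' y b v AB by (auto simp: N_def)
    ultimately have "adj x' v \<or> adj y b \<or> adj x' b"
      using P x' y b unfolding P4_free_def N_def by blast
    moreover have "\<not> adj y b" "\<not> adj x' b" using anti x' y b by (auto simp: anticomplete_to_def N_def)
    ultimately show False using x' sym by (auto simp: N_def dest: sympD)
  qed
  have "anticomplete_to adj (A - N) (insert v (N \<union> B))"
    using no_edge anti sym by (auto simp: anticomplete_to_def N_def dest: sympD)
  then show ?thesis
    unfolding decomposable_def homogeneous_def using x v AB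
    by (intro exI[of _ "A - N"] exI[of _ "insert v (N \<union> B)"]) (auto simp: N_def)
qed

lemma decomposable_insert_anticomplete:
  assumes sym: "symp adj" and P: "P4_free adj (insert v (A \<union> B))" and v: "v \<notin> A \<union> B"
    and AB: "A \<inter> B = {}" "A \<noteq> {}" "B \<noteq> {}" and anti: "anticomplete_to adj A B"
  shows "decomposable adj (insert v (A \<union> B))"
proof (cases "\<forall>x\<in>A \<union> B. adj v x")
  case True
  then have "complete_to adj {v} (A \<union> B)" by (simp add: complete_to_def)
  then show ?thesis
    unfolding decomposable_def homogeneous_def using v AB
    by (intro exI[of _ "{v}"] exI[of _ "A \<union> B"]) auto
next
  case False
  then obtain x where x: "x \<in> A \<union> B" "\<not> adj v x" by blast
  show ?thesis
  proof (cases "x \<in> A")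
    case True
    then show ?thesis using decomposable_insert_nonneighbour[OF sym P v AB(1,3) anti] x by blast
  next
    case False
    then have "decomposable adj (insert v (B \<union> A))"
      using decomposable_insert_nonneighbour[OF sym _ _ _ _ anticomplete_to_commute[OF sym anti]]
        P v AB x by (simp add: Un_commute Int_commute)
    then show ?thesis by (simp add: Un_commute)
  qed
qed

theorem P4_free_decomposable:
  assumes sym: "symp adj" and "finite S" "2 \<le> card S" "P4_free adj S"
  shows "decomposable adj S"
  using assms(2-4)
proof (induction S rule: finite_induct)
  case empty
  then show ?case by simp
next
  case (insert v S)
  show ?case
  proof (cases "card S < 2")
    case True
    then have "card S = 1" using insert by simp
    then obtain w where "S = {w}" by (rule card_1_singletonE)
    then show ?thesis
      unfolding decomposable_def homogeneous_def anticomplete_to_def complete_to_def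
      using insert by (intro exI[of _ "{v}"] exI[of _ "{w}"]) auto
  next
    case False
    then have "decomposable adj S"
      using insert.IH P4_free_subset[OF insert.prems(2)] by (simp add: subset_insertI)
    then obtain A B where AB: "A \<union> B = S" "A \<inter> B = {}" "A \<noteq> {}" "B \<noteq> {}" "homogeneous adj A B"
      unfolding decomposable_def by blast
    show ?thesis
    proof (cases "anticomplete_to adj A B")
      case True
      then show ?thesis using decomposable_insert_anticomplete[OF sym] insert AB by blast
    next
      case False
      then have "anticomplete_to (\<lambda>x y. \<not> adj x y) A B" using AB(5) by (simp add: homogeneous_def)
      then have "decomposable (\<lambda>x y. \<not> adj x y) (insert v S)"
        using decomposable_insert_anticomplete[OF symp_not[OF sym]] P4_free_not[OF sym insert.prems(2)]
          insert AB by blast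
      then show ?thesis by simp
    qed
  qed
qed

lemma decomposable_obtain_smaller_first:
  assumes "symp adj" "decomposable adj S"
  obtains A B where "A \<union> B = S" "A \<inter> B = {}" "A \<noteq> {}" "B \<noteq> {}" "homogeneous adj A B"
    "card A \<le> card B"
proof -
  obtain A B where AB: "A \<union> B = S" "A \<inter> B = {}" "A \<noteq> {}" "B \<noteq> {}" "homogeneous adj A B"
    using assms(2) unfolding decomposable_def by blast
  show thesis
  proof (cases "card A \<le> card B")
    case True
    with AB that show thesis by blast
  next
    case False
    with AB homogeneous_commute[OF assms(1) AB(5)] that[of B A] show thesis by auto
  qed
qed

definition homogeneous_pair_in :: "('a \<Rightarrow> 'a \<Rightarrow> bool) \<Rightarrow> nat \<Rightarrow> 'a set \<Rightarrow> bool" where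
  "homogeneous_pair_in adj m W \<longleftrightarrow> (\<exists>X Y. X \<subseteq> W \<and> Y \<subseteq> W \<and> X \<inter> Y = {} \<and>
     m \<le> card X \<and> m \<le> card Y \<and> homogeneous adj X Y)"

lemma homogeneous_pair_in_not [simp]:
  "homogeneous_pair_in (\<lambda>x y. \<not> adj x y) m W \<longleftrightarrow> homogeneous_pair_in adj m W"
  by (simp add: homogeneous_pair_in_def)

text \<open>A stage of the peeling process: \<open>S\<close> is still to be split, and \<open>U\<close>, \<open>V\<close> collect the
  small sides set aside so far.\<close>

definition peeling_state ::
  "('a \<Rightarrow> 'a \<Rightarrow> bool) \<Rightarrow> nat \<Rightarrow> 'a set \<Rightarrow> 'a set \<Rightarrow> 'a set \<Rightarrow> bool" where
  "peeling_state adj m S U V \<longleftrightarrow> finite S \<and> finite U \<and> finite V \<and> P4_free adj S \<and>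
     U \<inter> S = {} \<and> V \<inter> S = {} \<and> anticomplete_to adj U S \<and> complete_to adj V S \<and>
     card U < m \<and> card V < m \<and> 4 * m \<le> card S + card U + card V"

lemma peeling_state_not:
  "symp adj \<Longrightarrow> peeling_state adj m S U V \<Longrightarrow> peeling_state (\<lambda>x y. \<not> adj x y) m S V U"
  by (simp add: peeling_state_def P4_free_not add_ac)

lemma peeling_step:
  assumes state: "peeling_state adj m S U V" and AB: "A \<union> B = S" "A \<inter> B = {}"
    and anti: "anticomplete_to adj A B" and small: "card A < m"
  shows "homogeneous_pair_in adj m (S \<union> U \<union> V) \<or> peeling_state adj m B (U \<union> A) V"
proof -
  have fin: "finite A" "finite B" "finite U" using state AB(1) by (auto simp: peeling_state_def)
  have card_S: "card S = card A + card B" using AB fin card_Un_disjoint by metis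
  have card_UA: "card (U \<union> A) = card U + card A"
    using state AB(1) fin by (intro card_Un_disjoint) (auto simp: peeling_state_def)
  have anti_UA: "anticomplete_to adj (U \<union> A) B"
    using state anti AB(1) by (auto simp: peeling_state_def anticomplete_to_def)
  show ?thesis
  proof (cases "m \<le> card (U \<union> A)")
    case True
    then have "m \<le> card B" using card_S card_UA small state by (simp add: peeling_state_def)
    then have "homogeneous_pair_in adj m (S \<union> U \<union> V)"
      unfolding homogeneous_pair_in_def homogeneous_def using True anti_UA state AB
      by (intro exI[of _ "U \<union> A"] exI[of _ B]) (auto simp: peeling_state_def)
    then show ?thesis ..
  next
    case False
    then have "peeling_state adj m B (U \<union> A) V"
      using state AB fin card_S card_UA anti_UA P4_free_subset[of adj S B]
      by (auto simp: peeling_state_def complete_to_def)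
    then show ?thesis ..
  qed
qed

lemma homogeneous_pair_in_if_peeling_state:
  "symp adj \<Longrightarrow> peeling_state adj m S U V \<Longrightarrow> homogeneous_pair_in adj m (S \<union> U \<union> V)"
proof (induction "card S" arbitrary: adj S U V rule: less_induct)
  case less
  then have "2 \<le> card S" "finite S" "P4_free adj S" by (auto simp: peeling_state_def)
  then have "decomposable adj S" using P4_free_decomposable less.prems(1) by blast
  then obtain A B where AB: "A \<union> B = S" "A \<inter> B = {}" "A \<noteq> {}" "B \<noteq> {}"
    "homogeneous adj A B" "card A \<le> card B"
    using decomposable_obtain_smaller_first less.prems(1) by metis
  have "card B < card S"
    using AB \<open>finite S\<close> by (intro psubset_card_mono) auto
  show ?case
  proof (cases "m \<le> card A")
    case True
    then show ?thesis
      unfolding homogeneous_pair_in_def using AB by (intro exI[of _ A] exI[of _ B]) auto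
  next
    case False
    then have small: "card A < m" by simp
    have "B \<union> (U \<union> A) \<union> V = S \<union> U \<union> V" "B \<union> (V \<union> A) \<union> U = S \<union> U \<union> V" using AB(1) by auto
    consider "anticomplete_to adj A B" | "anticomplete_to (\<lambda>x y. \<not> adj x y) A B"
      using AB(5) homogeneous_def by auto
    then show ?thesis
    proof cases
      case 1
      with peeling_step[OF less.prems(2) AB(1,2) _ small] show ?thesis
        using less.hyps[OF \<open>card B < card S\<close> less.prems(1), of "U \<union> A" V]
          \<open>B \<union> (U \<union> A) \<union> V = _\<close> by auto
    next
      case 2
      with peeling_step[OF peeling_state_not[OF less.prems] AB(1,2) _ small] show ?thesis
        using less.hyps[OF \<open>card B < card S\<close> symp_not[OF less.prems(1)], of "V \<union> A" U]
          \<open>B \<union> (V \<union> A) \<union> U = _\<close> by (auto simp: Un_ac)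
    qed
  qed
qed

theorem P4_free_homogeneous_pair:
  assumes "symp adj" "finite S" "P4_free adj S" "4 * m \<le> card S"
  obtains X Y where "X \<subseteq> S" "Y \<subseteq> S" "X \<inter> Y = {}" "card X = m" "card Y = m"
    "homogeneous adj X Y"
proof (cases "m = 0")
  case True
  then show thesis using that[of "{}" "{}"] by (simp add: homogeneous_def anticomplete_to_def)
next
  case False
  then have "peeling_state adj m S {} {}"
    using assms by (simp add: peeling_state_def anticomplete_to_def complete_to_def)
  then have "homogeneous_pair_in adj m S"
    using homogeneous_pair_in_if_peeling_state[OF assms(1)] by fastforce
  then obtain X Y where XY: "X \<subseteq> S" "Y \<subseteq> S" "X \<inter> Y = {}" "m \<le> card X" "m \<le> card Y"
      "homogeneous adj X Y"
    unfolding homogeneous_pair_in_def by blast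
  obtain X' where "X' \<subseteq> X" "card X' = m" using obtain_subset_with_card_n[OF XY(4)] by blast
  moreover obtain Y' where "Y' \<subseteq> Y" "card Y' = m" using obtain_subset_with_card_n[OF XY(5)] by blast
  ultimately show thesis using that[of X' Y'] XY homogeneous_subset by blast
qed

section \<open>Packing induced paths greedily\<close>

definition graph_adj :: "'a set set \<Rightarrow> 'a \<Rightarrow> 'a \<Rightarrow> bool" where
  "graph_adj E x y \<longleftrightarrow> {x, y} \<in> E"

lemma symp_graph_adj: "symp (graph_adj E)"
  by (simp add: symp_def graph_adj_def insert_commute)

definition disjoint_set_pairs :: "nat \<Rightarrow> nat \<Rightarrow> (nat set \<times> nat set) set" where
  "disjoint_set_pairs n m =
     {(X, Y). X \<subseteq> {..<n} \<and> Y \<subseteq> {..<n} \<and> X \<inter> Y = {} \<and> card X = m \<and> card Y = m}"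

definition has_homogeneous_pair :: "nat \<Rightarrow> nat \<Rightarrow> nat set set \<Rightarrow> bool" where
  "has_homogeneous_pair n m E \<longleftrightarrow>
     (\<exists>(X, Y) \<in> disjoint_set_pairs n m. homogeneous (graph_adj E) X Y)"

lemma induced_P3_in_large_set:
  assumes "\<not> has_homogeneous_pair n m E" "S \<subseteq> {..<n}" "4 * m \<le> card S"
  shows "\<exists>t. induced_P3 n E t \<and> tuple_verts t \<subseteq> S"
proof (rule ccontr)
  assume none: "\<nexists>t. induced_P3 n E t \<and> tuple_verts t \<subseteq> S"
  have "P4_free (graph_adj E) S"
    unfolding P4_free_def graph_adj_def
  proof (intro ballI impI)
    fix a b c d assume abcd: "a \<in> S" "b \<in> S" "c \<in> S" "d \<in> S" "distinct [a, b, c, d]"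
      "{a, b} \<in> E" "{b, c} \<in> E" "{c, d} \<in> E"
    have "tuple_verts (a, b, c, d) \<subseteq> S" using abcd by (simp add: tuple_verts_def)
    then have "\<not> induced_P3 n E (a, b, c, d)" using none by blast
    moreover have "a < n" "b < n" "c < n" "d < n" using abcd assms(2) by auto
    ultimately show "{a, c} \<in> E \<or> {b, d} \<in> E \<or> {a, d} \<in> E"
      using abcd by (simp add: induced_P3_def)
  qed
  moreover have "finite S" using assms(2) finite_subset by blast
  ultimately obtain X Y where "X \<subseteq> S" "Y \<subseteq> S" "X \<inter> Y = {}" "card X = m" "card Y = m"
      "homogeneous (graph_adj E) X Y"
    using P4_free_homogeneous_pair[OF symp_graph_adj _ _ assms(3)] by metis
  then show False
    using assms(1,2) unfolding has_homogeneous_pair_def disjoint_set_pairs_def by blast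
qed

lemma finite_tuple_verts [simp]: "finite (tuple_verts t)"
  by (cases t) (simp add: tuple_verts_def)

lemma card_tuple_verts_le: "card (tuple_verts t) \<le> 4"
  by (cases t) (auto simp: tuple_verts_def card_insert_if)

lemma nth_snoc_disjoint:
  assumes "\<forall>i<length xs. \<forall>j<length xs. i \<noteq> j \<longrightarrow> f (xs ! i) \<inter> f (xs ! j) = {}"
    and "\<forall>s\<in>set xs. f s \<inter> f t = {}"
  shows "\<forall>i<length (xs @ [t]). \<forall>j<length (xs @ [t]). i \<noteq> j \<longrightarrow>
    f ((xs @ [t]) ! i) \<inter> f ((xs @ [t]) ! j) = {}"
  using assms by (auto simp: nth_append less_Suc_eq Int_commute)

lemma has_disjoint_induced_P3s_greedy:
  assumes large: "\<And>S. S \<subseteq> {..<n} \<Longrightarrow> N \<le> card S \<Longrightarrow> \<exists>t. induced_P3 n E t \<and> tuple_verts t \<subseteq> S"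
  shows "4 * k + N \<le> n \<Longrightarrow> has_disjoint_induced_P3s n E k"
proof (induction k)
  case 0
  show ?case unfolding has_disjoint_induced_P3s_def by simp
next
  case (Suc k)
  then obtain xs where xs: "length xs = k" "\<forall>t\<in>set xs. induced_P3 n E t"
    "\<forall>i<k. \<forall>j<k. i \<noteq> j \<longrightarrow> tuple_verts (xs ! i) \<inter> tuple_verts (xs ! j) = {}"
    unfolding has_disjoint_induced_P3s_def by auto
  define used where "used = (\<Union>t\<in>set xs. tuple_verts t)"
  have "card used \<le> (\<Sum>t\<in>set xs. card (tuple_verts t))"
    unfolding used_def by (rule card_UN_le) simp
  also have "\<dots> \<le> 4 * card (set xs)"
    using sum_bounded_above[of "set xs" "\<lambda>t. card (tuple_verts t)" 4] card_tuple_verts_le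
    by (simp add: mult.commute)
  also have "\<dots> \<le> 4 * k" using card_length[of xs] xs(1) by simp
  finally have "card used \<le> 4 * k" .
  moreover have "n - card used \<le> card ({..<n} - used)"
    using diff_card_le_card_Diff[of used "{..<n}"] by (simp add: used_def)
  ultimately have "N \<le> card ({..<n} - used)" using Suc.prems by arith
  then obtain t where t: "induced_P3 n E t" "tuple_verts t \<subseteq> {..<n} - used"
    using large[of "{..<n} - used"] by blast
  show ?case
    unfolding has_disjoint_induced_P3s_def
  proof (intro exI[of _ "xs @ [t]"] conjI)
    show "length (xs @ [t]) = Suc k" using xs(1) by simp
    show "\<forall>s\<in>set (xs @ [t]). induced_P3 n E s" using xs(2) t(1) by simp
    have "\<forall>s\<in>set xs. tuple_verts s \<inter> tuple_verts t = {}" using t(2) by (auto simp: used_def)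
    then show "\<forall>i<Suc k. \<forall>j<Suc k. i \<noteq> j \<longrightarrow>
        tuple_verts ((xs @ [t]) ! i) \<inter> tuple_verts ((xs @ [t]) ! j) = {}"
      using nth_snoc_disjoint[of xs tuple_verts t] xs(1,3) by simp
  qed
qed

lemma disjoint_induced_P3s_if_no_homogeneous_pair:
  assumes "n \<ge> 200" "\<not> has_homogeneous_pair n (n div 5 + 1) E"
  shows "has_disjoint_induced_P3s n E (n div 100 + 1)"
proof (rule has_disjoint_induced_P3s_greedy)
  show "\<exists>t. induced_P3 n E t \<and> tuple_verts t \<subseteq> S"
    if "S \<subseteq> {..<n}" "4 * (n div 5 + 1) \<le> card S" for S
    using induced_P3_in_large_set assms(2) that by blast
  show "4 * (n div 100 + 1) + 4 * (n div 5 + 1) \<le> n" using assms(1) by auto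
qed

section \<open>The random graph\<close>

lemma finite_all_edges [simp]: "finite (all_edges n)"
proof -
  have "all_edges n \<subseteq> Pow {..<n}" unfolding all_edges_def by auto
  then show ?thesis using finite_subset by blast
qed

lemma gnp_prob_cong:
  "(\<And>E. E \<subseteq> all_edges n \<Longrightarrow> P E \<longleftrightarrow> Q E) \<Longrightarrow> gnp_prob n p P = gnp_prob n p Q"
  unfolding gnp_prob_def by (intro sum.cong) auto

lemma gnp_prob_mono:
  assumes "0 \<le> p" "p \<le> 1" "\<And>E. E \<subseteq> all_edges n \<Longrightarrow> P E \<Longrightarrow> Q E"
  shows "gnp_prob n p P \<le> gnp_prob n p Q"
  unfolding gnp_prob_def using assms by (intro sum_mono) auto

lemma gnp_prob_disj_le:
  assumes "0 \<le> p" "p \<le> 1"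
  shows "gnp_prob n p (\<lambda>E. P E \<or> Q E) \<le> gnp_prob n p P + gnp_prob n p Q"
  unfolding gnp_prob_def sum.distrib[symmetric] using assms by (intro sum_mono) auto

lemma gnp_prob_Bex_le:
  assumes "finite I" "0 \<le> p" "p \<le> 1"
  shows "gnp_prob n p (\<lambda>E. \<exists>i\<in>I. Q i E) \<le> (\<Sum>i\<in>I. gnp_prob n p (Q i))"
  using assms(1)
proof (induction I rule: finite_induct)
  case empty
  then show ?case by (simp add: gnp_prob_def)
next
  case (insert j I)
  have "gnp_prob n p (\<lambda>E. \<exists>i\<in>insert j I. Q i E) \<le> gnp_prob n p (Q j) + gnp_prob n p (\<lambda>E. \<exists>i\<in>I. Q i E)"
    using gnp_prob_disj_le[OF assms(2,3)] by simp
  then show ?case using insert by simp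
qed

lemma gnp_prob_supset:
  assumes "F \<subseteq> all_edges n"
  shows "gnp_prob n p (\<lambda>E. F \<subseteq> E) = p ^ card F"
proof -
  define U where "U = all_edges n"
  have "gnp_prob n p (\<lambda>E. F \<subseteq> E) = (\<Sum>E\<in>Pow U. (\<Prod>e\<in>E. p) * (\<Prod>e\<in>U - E. if e \<in> F then 0 else 1 - p))"
    unfolding gnp_prob_def U_def[symmetric]
  proof (intro sum.cong refl)
    fix E assume E: "E \<in> Pow U"
    then have "finite E" using finite_subset[OF _ finite_all_edges] by (auto simp: U_def)
    show "(if F \<subseteq> E then p ^ card E * (1 - p) ^ (card U - card E) else 0) =
        (\<Prod>e\<in>E. p) * (\<Prod>e\<in>U - E. if e \<in> F then 0 else 1 - p)"
    proof (cases "F \<subseteq> E")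
      case True
      then have "(\<Prod>e\<in>U - E. if e \<in> F then 0 else 1 - p) = (\<Prod>e\<in>U - E. 1 - p)"
        by (intro prod.cong) auto
      then show ?thesis using True E \<open>finite E\<close> by (simp add: card_Diff_subset)
    next
      case False
      then have "(\<Prod>e\<in>U - E. if e \<in> F then 0 else 1 - p) = 0"
        using assms by (intro prod_zero) (auto simp: U_def)
      then show ?thesis using False by simp
    qed
  qed
  also have "\<dots> = (\<Prod>e\<in>U. p + (if e \<in> F then 0 else 1 - p))"
    by (rule prod_add[symmetric]) (simp add: U_def)
  also have "\<dots> = (\<Prod>e\<in>U. if e \<in> F then p else 1)"
    by (intro prod.cong) auto
  also have "\<dots> = p ^ card F"
    using prod.inter_restrict[of U "\<lambda>_. p" F] assms by (simp add: U_def Int_absorb1)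
  finally show ?thesis .
qed

lemma gnp_prob_complement:
  "gnp_prob n p (\<lambda>E. P (all_edges n - E)) = gnp_prob n (1 - p) P"
  unfolding gnp_prob_def
proof (rule sum.reindex_bij_witness[of _ "\<lambda>E. all_edges n - E" "\<lambda>E. all_edges n - E"])
  fix E assume "E \<in> Pow (all_edges n)"
  then have "E \<subseteq> all_edges n" "finite E" using finite_subset[OF _ finite_all_edges] by auto
  moreover have "card E \<le> card (all_edges n)" using \<open>E \<subseteq> all_edges n\<close> by (simp add: card_mono)
  ultimately show "(if P (all_edges n - E) then (1 - p) ^ card (all_edges n - E) *
        (1 - (1 - p)) ^ (card (all_edges n) - card (all_edges n - E)) else 0) =
      (if P (all_edges n - E) then p ^ card E * (1 - p) ^ (card (all_edges n) - card E) else 0)"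
    by (simp add: card_Diff_subset mult.commute)
qed auto

lemma gnp_prob_disjoint:
  assumes "F \<subseteq> all_edges n"
  shows "gnp_prob n p (\<lambda>E. E \<inter> F = {}) = (1 - p) ^ card F"
proof -
  have "gnp_prob n p (\<lambda>E. E \<inter> F = {}) = gnp_prob n p (\<lambda>E. F \<subseteq> all_edges n - E)"
    using assms by (intro gnp_prob_cong) auto
  also have "\<dots> = (1 - p) ^ card F"
    by (simp add: gnp_prob_complement gnp_prob_supset[OF assms])
  finally show ?thesis .
qed

lemma gnp_prob_True: "gnp_prob n p (\<lambda>_. True) = 1"
  using gnp_prob_supset[of "{}" n p] by simp

lemma gnp_prob_not: "gnp_prob n p (\<lambda>E. \<not> P E) = 1 - gnp_prob n p P"
proof -
  have "gnp_prob n p (\<lambda>E. \<not> P E) + gnp_prob n p P = gnp_prob n p (\<lambda>_. True)"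
    unfolding gnp_prob_def sum.distrib[symmetric] by (intro sum.cong) auto
  then show ?thesis by (simp add: gnp_prob_True)
qed

lemma gnp_prob_homogeneous_le:
  assumes "X \<subseteq> {..<n}" "Y \<subseteq> {..<n}" "X \<inter> Y = {}" "0 \<le> p" "p \<le> 1"
  shows "gnp_prob n p (\<lambda>E. homogeneous (graph_adj E) X Y)
    \<le> p ^ (card X * card Y) + (1 - p) ^ (card X * card Y)"
proof -
  define F where "F = (\<lambda>(x, y). {x, y}) ` (X \<times> Y)"
  have F: "F \<subseteq> all_edges n" using assms(1-3) unfolding F_def all_edges_def by fastforce
  have "inj_on (\<lambda>(x, y). {x, y}) (X \<times> Y)"
    using assms(3) by (auto simp: inj_on_def doubleton_eq_iff)
  then have card_F: "card F = card X * card Y"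
    by (simp add: F_def card_image card_cartesian_product)
  have "homogeneous (graph_adj E) X Y \<longleftrightarrow> F \<subseteq> E \<or> E \<inter> F = {}" for E
    by (auto simp: homogeneous_def anticomplete_to_def complete_to_def graph_adj_def F_def)
  then have "gnp_prob n p (\<lambda>E. homogeneous (graph_adj E) X Y)
      = gnp_prob n p (\<lambda>E. F \<subseteq> E \<or> E \<inter> F = {})" by simp
  also have "\<dots> \<le> gnp_prob n p (\<lambda>E. F \<subseteq> E) + gnp_prob n p (\<lambda>E. E \<inter> F = {})"
    by (rule gnp_prob_disj_le[OF assms(4,5)])
  also have "\<dots> = p ^ (card X * card Y) + (1 - p) ^ (card X * card Y)"
    using gnp_prob_supset[OF F] gnp_prob_disjoint[OF F] card_F by simp
  finally show ?thesis .
qed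

lemma power_square_le_exp:
  fixes q :: real
  assumes "0 \<le> q" "100 / real n \<le> 1 - q"
  shows "q ^ ((n div 5 + 1) * (n div 5 + 1)) \<le> exp (- 4 * real n)"
proof -
  define m where "m = n div 5 + 1"
  have q: "0 \<le> 1 - q" using assms(2) by (smt (verit) divide_nonneg_nonneg of_nat_0_le_iff)
  have "4 * real n \<le> real m * real m * (1 - q)"
  proof (cases "n = 0")
    case True
    then show ?thesis using q by simp
  next
    case False
    then have nq: "100 \<le> real n * (1 - q)" using assms(2) by (simp add: field_simps)
    have "n \<le> 5 * m" unfolding m_def by simp
    then have "real n * real n \<le> (5 * real m) * (5 * real m)"
      by (intro mult_mono) (simp_all flip: of_nat_le_iff)
    then have "real n * real n * (1 - q) \<le> 25 * (real m * real m) * (1 - q)"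
      by (intro mult_right_mono[OF _ q]) simp
    moreover have "100 * real n \<le> real n * real n * (1 - q)"
      using mult_left_mono[OF nq, of "real n"] by (simp add: algebra_simps)
    ultimately show ?thesis by linarith
  qed
  have "q \<le> exp (q - 1)" using exp_ge_add_one_self[of "q - 1"] by simp
  then have "q ^ (m * m) \<le> exp (q - 1) ^ (m * m)" using assms(1) by (rule power_mono)
  also have "\<dots> = exp (- (real m * real m * (1 - q)))"
    by (simp add: exp_of_nat_mult[symmetric] algebra_simps)
  also have "\<dots> \<le> exp (- 4 * real n)" using \<open>4 * real n \<le> _\<close> by simp
  finally show ?thesis by (simp add: m_def)
qed

lemma card_disjoint_set_pairs_le: "card (disjoint_set_pairs n m) \<le> 4 ^ n"
proof -
  have "disjoint_set_pairs n m \<subseteq> Pow {..<n} \<times> Pow {..<n}"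
    unfolding disjoint_set_pairs_def by auto
  then have "card (disjoint_set_pairs n m) \<le> card (Pow {..<n :: nat} \<times> Pow {..<n})"
    by (intro card_mono) auto
  also have "\<dots> = 4 ^ n" by (simp add: card_cartesian_product card_Pow power_mult_distrib[symmetric])
  finally show ?thesis .
qed

lemma four_power_le_exp: "(4::real) ^ n \<le> exp (2 * real n)"
proof -
  have "(2::real) \<le> exp 1" using exp_ge_add_one_self[of 1] by simp
  then have "2 * 2 \<le> exp 1 * exp (1::real)" by (intro mult_mono) auto
  then have "(4::real) \<le> exp 2" by (simp flip: exp_add)
  then have "(4::real) ^ n \<le> exp 2 ^ n" by (intro power_mono) auto
  then show ?thesis by (simp add: exp_of_nat_mult[symmetric] mult.commute)
qed

lemma gnp_prob_has_homogeneous_pair_le: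
  assumes "0 < n" "100 / real n \<le> p" "p \<le> 1 - 100 / real n"
  shows "gnp_prob n p (has_homogeneous_pair n (n div 5 + 1)) \<le> exp (- real n)"
proof -
  define m where "m = n div 5 + 1"
  define I where "I = disjoint_set_pairs n m"
  have p: "0 \<le> p" "p \<le> 1" using assms(2,3) divide_nonneg_nonneg[of 100 "real n"] by linarith+
  have "finite I"
    using finite_subset[of I "Pow {..<n} \<times> Pow {..<n}"] by (auto simp: I_def disjoint_set_pairs_def)
  have "gnp_prob n p (has_homogeneous_pair n m)
      = gnp_prob n p (\<lambda>E. \<exists>i\<in>I. homogeneous (graph_adj E) (fst i) (snd i))"
    by (intro gnp_prob_cong) (simp add: has_homogeneous_pair_def I_def case_prod_beta)
  also have "\<dots> \<le> (\<Sum>i\<in>I. gnp_prob n p (\<lambda>E. homogeneous (graph_adj E) (fst i) (snd i)))"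
    by (rule gnp_prob_Bex_le[OF \<open>finite I\<close> p])
  also have "\<dots> \<le> (\<Sum>i\<in>I. 2 * exp (- 4 * real n))"
  proof (rule sum_mono)
    fix i assume "i \<in> I"
    then have i: "fst i \<subseteq> {..<n}" "snd i \<subseteq> {..<n}" "fst i \<inter> snd i = {}"
      "card (fst i) = m" "card (snd i) = m"
      by (auto simp: I_def disjoint_set_pairs_def)
    have "gnp_prob n p (\<lambda>E. homogeneous (graph_adj E) (fst i) (snd i))
        \<le> p ^ (m * m) + (1 - p) ^ (m * m)"
      using gnp_prob_homogeneous_le[OF i(1-3) p] i(4,5) by simp
    also have "\<dots> \<le> exp (- 4 * real n) + exp (- 4 * real n)"
      using power_square_le_exp[of p n] power_square_le_exp[of "1 - p" n] p assms(2,3)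
      by (simp add: m_def)
    finally show "gnp_prob n p (\<lambda>E. homogeneous (graph_adj E) (fst i) (snd i))
        \<le> 2 * exp (- 4 * real n)" by simp
  qed
  also have "\<dots> = real (card I) * (2 * exp (- 4 * real n))" by simp
  also have "\<dots> \<le> exp (2 * real n) * (exp (real n) * exp (- 4 * real n))"
  proof (rule mult_mono)
    show "real (card I) \<le> exp (2 * real n)"
      using card_disjoint_set_pairs_le[of n m] four_power_le_exp[of n]
      by (simp add: I_def) (metis of_nat_le_iff of_nat_numeral of_nat_power order_trans)
    have "1 \<le> real n" using assms(1) by simp
    then have "2 \<le> exp (real n)" using exp_ge_add_one_self[of "real n"] by linarith
    then show "2 * exp (- 4 * real n) \<le> exp (real n) * exp (- 4 * real n)"
      by (intro mult_right_mono) auto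
  qed auto
  also have "\<dots> = exp (- real n)" by (simp flip: exp_add)
  finally show ?thesis by (simp add: m_def)
qed

theorem mainTheorem13:
  shows "\<exists>c::real. c > 0 \<and> (\<exists>n0::nat. \<forall>n\<ge>n0. \<forall>p::real.
     100 / real n \<le> p \<and> p \<le> 1 - 100 / real n \<longrightarrow>
     gnp_prob n p (\<lambda>E. \<exists>k. real k \<ge> real n / 100 \<and> has_disjoint_induced_P3s n E k)
       \<ge> 1 - exp (- c * real n))"
proof (intro exI conjI allI impI)
  show "(1::real) > 0" by simp
  fix n :: nat and p :: real
  assume n: "200 \<le> n" and p: "100 / real n \<le> p \<and> p \<le> 1 - 100 / real n"
  have p01: "0 \<le> p" "p \<le> 1" using p divide_nonneg_nonneg[of 100 "real n"] by linarith+
  have "1 - exp (- 1 * real n) \<le> 1 - gnp_prob n p (has_homogeneous_pair n (n div 5 + 1))"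
    using gnp_prob_has_homogeneous_pair_le[of n p] n p by simp
  also have "\<dots> = gnp_prob n p (\<lambda>E. \<not> has_homogeneous_pair n (n div 5 + 1) E)"
    by (simp add: gnp_prob_not)
  also have "\<dots> \<le> gnp_prob n p (\<lambda>E. \<exists>k. real k \<ge> real n / 100 \<and> has_disjoint_induced_P3s n E k)"
  proof (rule gnp_prob_mono[OF p01])
    fix E assume "\<not> has_homogeneous_pair n (n div 5 + 1) E"
    then have "has_disjoint_induced_P3s n E (n div 100 + 1)"
      using disjoint_induced_P3s_if_no_homogeneous_pair n by blast
    moreover have "real n / 100 \<le> real (n div 100 + 1)" by linarith
    ultimately show "\<exists>k. real k \<ge> real n / 100 \<and> has_disjoint_induced_P3s n E k" by blast
  qed
  finally show "gnp_prob n p (\<lambda>E. \<exists>k. real k \<ge> real n / 100 \<and> has_disjoint_induced_P3s n E k)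
      \<ge> 1 - exp (- 1 * real n)" .
qed

end
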